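(* Let $\lambda\in Y^{++}$ and let $(\mu_n)_{n\in\mathbb N}$ be a sequence in $W^v\lambda$ with $l(w_{\mu_n})\to+\infty$. Then $\mu_n-\lambda\in Q^\vee$ for all $n$ and $h(\mu_n-\lambda)\to-\infty$.
   Context: $I$ finite, $A$ a generalized Cartan matrix, $Y$ a free $\mathbb Z$-module of finite rank with free family $(\alpha_i^\vee)_{i\in I}$ and $\alpha_i\in\mathrm{Hom}(Y,\mathbb Z)$ with $\alpha_j(\alpha_i^\vee)=a_{i,j}$; $\mathbb A=Y\otimes\mathbb R$; $r_i(v)=v-\alpha_i(v)\alpha_i^\vee$; $W^v=\langle r_i\rangle$ with length $l$; $Q^\vee=\bigoplus\mathbb Z\alpha_i^\vee$; $C^v_f=\{\alpha_i>0\ \forall i\}$, $\mathcal T=\bigcup_w w\overline{C^v_f}$, $Y^+=Y\cap\mathcal T$, $Y^{++}=Y\cap\overline{C^v_f}$. For $x=\sum_i x_i\alpha_i^\vee\in Q^\vee$, $h(x)=\sum_i x_i$. For $\mu\in Y^+$, $w_\mu$ denotes the element $w\in W^v$ of minimal length such that $w^{-1}\mu\in\overline{C^v_f}$. *)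

theory Defs
  imports "HOL-Analysis.Finite_Cartesian_Product"
begin

text \<open>The lattice Y is modelled as int^'d ('d a finite type, the rank).
  Roots alpha_i in Hom(Y,Z) are represented by vectors rt i via the
  standard pairing.\<close>

definition pair :: "int ^ 'd \<Rightarrow> int ^ 'd \<Rightarrow> int" where
  "pair a v = (\<Sum>k\<in>UNIV. a $ k * v $ k)"

definition gen_cartan_matrix :: "('i \<Rightarrow> 'i \<Rightarrow> int) \<Rightarrow> bool" where
  "gen_cartan_matrix A \<longleftrightarrow>
     (\<forall>i. A i i = 2) \<and> (\<forall>i j. i \<noteq> j \<longrightarrow> A i j \<le> 0) \<and>
     (\<forall>i j. A i j = 0 \<longleftrightarrow> A j i = 0)"

definition free_family :: "('i::finite \<Rightarrow> int ^ 'd) \<Rightarrow> bool" where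
  "free_family cor \<longleftrightarrow> (\<forall>c. (\<Sum>i\<in>UNIV. c i *s cor i) = 0 \<longrightarrow> (\<forall>i. c i = 0))"

definition refl :: "('i \<Rightarrow> int ^ 'd) \<Rightarrow> ('i \<Rightarrow> int ^ 'd) \<Rightarrow> 'i \<Rightarrow> int ^ 'd \<Rightarrow> int ^ 'd" where
  "refl cor rt i v = v - pair (rt i) v *s cor i"

definition word_act :: "('i \<Rightarrow> int ^ 'd) \<Rightarrow> ('i \<Rightarrow> int ^ 'd) \<Rightarrow> 'i list \<Rightarrow> int ^ 'd \<Rightarrow> int ^ 'd" where
  "word_act cor rt ws = foldr (\<lambda>i f. refl cor rt i \<circ> f) ws id"

definition weyl :: "('i \<Rightarrow> int ^ 'd) \<Rightarrow> ('i \<Rightarrow> int ^ 'd) \<Rightarrow> (int ^ 'd \<Rightarrow> int ^ 'd) set" where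
  "weyl cor rt = {word_act cor rt ws | ws. True}"

definition wlen :: "('i \<Rightarrow> int ^ 'd) \<Rightarrow> ('i \<Rightarrow> int ^ 'd) \<Rightarrow> (int ^ 'd \<Rightarrow> int ^ 'd) \<Rightarrow> nat" where
  "wlen cor rt w = (LEAST n. \<exists>ws. length ws = n \<and> word_act cor rt ws = w)"

definition dominant :: "('i \<Rightarrow> int ^ 'd) \<Rightarrow> int ^ 'd \<Rightarrow> bool" where
  "dominant rt v \<longleftrightarrow> (\<forall>i. pair (rt i) v \<ge> 0)"

definition len_wmu :: "('i \<Rightarrow> int ^ 'd) \<Rightarrow> ('i \<Rightarrow> int ^ 'd) \<Rightarrow> int ^ 'd \<Rightarrow> nat" where
  "len_wmu cor rt \<mu> = (LEAST n. \<exists>w\<in>weyl cor rt. wlen cor rt w = n \<and>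
       (\<exists>v. dominant rt v \<and> w v = \<mu>))"

definition in_Qcor :: "('i::finite \<Rightarrow> int ^ 'd) \<Rightarrow> int ^ 'd \<Rightarrow> bool" where
  "in_Qcor cor x \<longleftrightarrow> (\<exists>c. x = (\<Sum>i\<in>UNIV. c i *s cor i))"

definition height :: "('i::finite \<Rightarrow> int ^ 'd) \<Rightarrow> int ^ 'd \<Rightarrow> int" where
  "height cor x = (THE s. \<exists>c. x = (\<Sum>i\<in>UNIV. c i *s cor i) \<and> s = (\<Sum>i\<in>UNIV. c i))"

end

theory Submission
  imports Defs
begin

text \<open>
  For dominant \<open>\<lambda>\<close> and any \<open>w \<in> W\<^sup>v\<close> one has \<open>\<lambda> - w \<lambda> \<in> Q\<^sup>\<vee>\<^sub>+\<close>: writing \<open>w = r\<^sub>j w'\<close>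
  reduced, \<open>\<lambda> - w \<lambda> = (\<lambda> - w' \<lambda>) + \<alpha>\<^sub>j(w' \<lambda>) \<alpha>\<^sub>j\<^sup>\<vee>\<close> and \<open>\<alpha>\<^sub>j(w' \<lambda>) = (w'\<^sup>-\<^sup>1 \<alpha>\<^sub>j)(\<lambda>) \<ge> 0\<close>
  because \<open>w'\<^sup>-\<^sup>1 \<alpha>\<^sub>j\<close> is a positive root (Tits' argument through rank-2 parabolic
  factorisations, carried out in the formal root lattice \<open>\<int>\<^sup>I\<close>, since the \<open>\<alpha>\<^sub>i\<close> need not be
  linearly independent). Hence \<open>h(\<mu> - \<lambda>) \<le> 0\<close> on the orbit. Conversely, if \<open>\<alpha>\<^sub>i(\<mu>) < 0\<close> then
  \<open>r\<^sub>i \<mu> = \<mu> - \<alpha>\<^sub>i(\<mu>) \<alpha>\<^sub>i\<^sup>\<vee>\<close> has strictly larger height, so at most \<open>-h(\<mu> - \<lambda>)\<close> such reflections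
  bring \<open>\<mu>\<close> into the dominant chamber: \<open>l(w\<^sub>\<mu>) \<le> -h(\<mu> - \<lambda>)\<close>.
\<close>

lemma pair_add: "pair g (x + y) = pair g x + pair g y"
  by (simp add: pair_def sum.distrib algebra_simps)

lemma pair_diff: "pair g (x - y) = pair g x - pair g y"
  by (simp add: pair_def sum_subtractf algebra_simps)

lemma pair_smult: "pair g (c *s x) = c * pair g x"
  by (simp add: pair_def sum_distrib_left algebra_simps)

lemma pair_axis: "pair g (axis b 1) = g $ b"
  by (simp add: pair_def axis_def if_distrib sum.If_cases cong del: if_weak_cong)

definition pseudo_refl :: "int ^ 'n \<Rightarrow> int ^ 'n \<Rightarrow> int ^ 'n \<Rightarrow> int ^ 'n" where
  "pseudo_refl g h v = v - pair g v *s h"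

lemma pseudo_refl_involutive: "pair g h = 2 \<Longrightarrow> pseudo_refl g h (pseudo_refl g h v) = v"
  by (simp add: pseudo_refl_def pair_diff pair_smult vec_eq_iff algebra_simps)

lemma pseudo_refl_linear:
  "pseudo_refl g h (x *s a + y *s b) = x *s pseudo_refl g h a + y *s pseudo_refl g h b"
  by (simp add: pseudo_refl_def pair_add pair_smult vec_eq_iff algebra_simps)

lemma sum_coeffs_update:
  fixes c :: "'i::finite \<Rightarrow> 'a::ring" and f :: "'i \<Rightarrow> 'a ^ 'n"
  shows "(\<Sum>i\<in>UNIV. (c i + (if i = j then t else 0)) *s f i) = (\<Sum>i\<in>UNIV. c i *s f i) + t *s f j"
proof -
  have "(\<Sum>i\<in>UNIV. (c i + (if i = j then t else 0)) *s f i)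
     = (\<Sum>i\<in>UNIV. c i *s f i + (if i = j then t *s f i else 0))"
    by (intro sum.cong) (auto simp: vector_sadd_rdistrib)
  then show ?thesis by (simp add: sum.distrib vector_sadd_rdistrib)
qed

section \<open>Rank two\<close>

definition finite_rank2 :: "(int \<times> int) set" where
  "finite_rank2 = {(0,0), (1,1), (1,2), (2,1), (1,3), (3,1)}"

lemma finite_rank2I:
  fixes p q :: int
  assumes "p \<ge> 0" "q \<ge> 0" "p = 0 \<longleftrightarrow> q = 0" "p * q < 4"
  shows "(p, q) \<in> finite_rank2"
proof (cases "p = 0")
  case True then show ?thesis using assms by (auto simp: finite_rank2_def)
next
  case False
  then have p1: "p \<ge> 1" "q \<ge> 1" using assms by auto
  have "p * 1 \<le> p * q" "1 * q \<le> p * q"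
    using p1 by (intro mult_left_mono mult_right_mono; simp)+
  then have "p \<le> 3" "q \<le> 3" using assms by auto
  then have "p = 1 \<or> p = 2 \<or> p = 3" "q = 1 \<or> q = 2 \<or> q = 3" using p1 by auto
  then show ?thesis using assms(4) by (elim disjE; simp add: finite_rank2_def)
qed

text \<open>The order \<open>m\<^sub>i\<^sub>j\<close> of \<open>r\<^sub>i r\<^sub>j\<close> as a function of the product \<open>a\<^sub>i\<^sub>j a\<^sub>j\<^sub>i \<in> {0,1,2,3}\<close>.\<close>
definition braid_order :: "int \<Rightarrow> nat" where
  "braid_order n = (if n = 0 then 2 else if n = 1 then 3 else if n = 2 then 4 else 6)"

lemma braid_order_ge_2: "braid_order n \<ge> 2"
  by (simp add: braid_order_def)

text \<open>
  The coordinates \<open>(X, Y)\<close> of \<open>v + X h\<^sub>1 + Y h\<^sub>2\<close> after applying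
  \<open>pseudo_refl g\<^sub>1 h\<^sub>1 \<circ> pseudo_refl g\<^sub>2 h\<^sub>2\<close>, where \<open>a = g\<^sub>1(v)\<close>, \<open>b = g\<^sub>2(v)\<close>,
  \<open>g\<^sub>1(h\<^sub>2) = -p\<close> and \<open>g\<^sub>2(h\<^sub>1) = -q\<close>.
\<close>
definition rank2_step :: "int \<Rightarrow> int \<Rightarrow> int \<Rightarrow> int \<Rightarrow> int \<times> int \<Rightarrow> int \<times> int" where
  "rank2_step p q a b XY = (let Y' = - snd XY - b + q * fst XY in (- fst XY - a + p * Y', Y'))"

lemma pseudo_refl_plane:
  assumes "pair g h = 2" "pair g h' = - p"
  shows "pseudo_refl g h (v + X *s h + Y *s h') = v + (- X - pair g v + p * Y) *s h + Y *s h'"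
  using assms by (simp add: pseudo_refl_def pair_add pair_smult vec_eq_iff algebra_simps)

lemma pseudo_refl_pair_funpow:
  assumes "pair g1 h1 = 2" "pair g1 h2 = - p" "pair g2 h2 = 2" "pair g2 h1 = - q"
  shows "((pseudo_refl g1 h1 \<circ> pseudo_refl g2 h2) ^^ n) (v + X *s h1 + Y *s h2) =
     v + fst ((rank2_step p q (pair g1 v) (pair g2 v) ^^ n) (X, Y)) *s h1
       + snd ((rank2_step p q (pair g1 v) (pair g2 v) ^^ n) (X, Y)) *s h2"
proof (induction n arbitrary: X Y)
  case 0 then show ?case by simp
next
  case (Suc n)
  have "pseudo_refl g2 h2 (v + X *s h1 + Y *s h2) = v + X *s h1 + (- Y - pair g2 v + q * X) *s h2"
    using pseudo_refl_plane[OF assms(3,4), of v Y X] by (simp add: ac_simps)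
  then have "(pseudo_refl g1 h1 \<circ> pseudo_refl g2 h2) (v + X *s h1 + Y *s h2) =
     v + fst (rank2_step p q (pair g1 v) (pair g2 v) (X, Y)) *s h1
       + snd (rank2_step p q (pair g1 v) (pair g2 v) (X, Y)) *s h2"
    by (simp add: pseudo_refl_plane[OF assms(1,2)] rank2_step_def Let_def)
  then show ?case using Suc by (simp add: funpow_Suc_right del: funpow.simps)
qed

lemma pseudo_refl_braid:
  assumes "pair g1 h1 = 2" "pair g1 h2 = - p" "pair g2 h2 = 2" "pair g2 h1 = - q"
    and "(p, q) \<in> finite_rank2"
  shows "(pseudo_refl g1 h1 \<circ> pseudo_refl g2 h2) ^^ braid_order (p * q) = id"
proof
  fix v
  have "(rank2_step p q a b ^^ braid_order (p * q)) (0, 0) = (0, 0)" for a b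
    using assms(5) by (auto simp: finite_rank2_def braid_order_def rank2_step_def Let_def
        numeral_eq_Suc algebra_simps)
  then show "((pseudo_refl g1 h1 \<circ> pseudo_refl g2 h2) ^^ braid_order (p * q)) v = id v"
    using pseudo_refl_pair_funpow[OF assms(1-4), of "braid_order (p * q)" v 0 0] by simp
qed

fun alt :: "'a \<Rightarrow> 'a \<Rightarrow> nat \<Rightarrow> 'a list" where
  "alt a b 0 = []"
| "alt a b (Suc n) = a # alt b a n"

lemma length_alt [simp]: "length (alt a b n) = n"
  by (induction n arbitrary: a b) auto

lemma alt_add: "alt a b (k + l) = alt a b k @ (if even k then alt a b l else alt b a l)"
  by (induction k arbitrary: a b) auto

lemma alt_Suc_snoc: "alt a b (Suc k) = alt a b k @ [if even k then a else b]"
  using alt_add[of a b k 1] by simp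

text \<open>
  \<open>dihedral_coeffs p q k\<close> are the coordinates in the basis \<open>\<alpha>\<^sub>i, \<alpha>\<^sub>j\<close> of the root obtained
  from \<open>\<alpha>\<^sub>i\<close> by alternately applying \<open>k\<close> of the reflections \<open>r\<^sub>j, r\<^sub>i, r\<^sub>j, \<dots>\<close>, where
  \<open>a\<^sub>i\<^sub>j = -p\<close> and \<open>a\<^sub>j\<^sub>i = -q\<close>.
\<close>
fun dihedral_coeffs :: "int \<Rightarrow> int \<Rightarrow> nat \<Rightarrow> int \<times> int" where
  "dihedral_coeffs p q 0 = (1, 0)"
| "dihedral_coeffs p q (Suc k) =
    (let (x, y) = dihedral_coeffs p q k in
     if even k then (x, q * x - y) else (p * y - x, y))"

lemma dihedral_coeffs_nonneg_infinite:
  assumes p: "p \<ge> 0" and q: "q \<ge> 0" and pq: "p * q \<ge> 4"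
  shows "fst (dihedral_coeffs p q k) \<ge> 0 \<and> snd (dihedral_coeffs p q k) \<ge> 0 \<and>
    (if even k then p * snd (dihedral_coeffs p q k) \<le> 2 * fst (dihedral_coeffs p q k)
     else q * fst (dihedral_coeffs p q k) \<le> 2 * snd (dihedral_coeffs p q k))"
proof (induction k)
  case 0 then show ?case by simp
next
  case (Suc k)
  obtain x y where xy: "dihedral_coeffs p q k = (x, y)" by fastforce
  have x0: "x \<ge> 0" and y0: "y \<ge> 0" using Suc xy by auto
  show ?case
  proof (cases "even k")
    case True
    then have h: "p * y \<le> 2 * x" using Suc xy by auto
    have "4 * y \<le> (p * q) * y" using pq y0 by (intro mult_right_mono) auto
    also have "\<dots> = q * (p * y)" by (simp add: algebra_simps)
    also have "\<dots> \<le> q * (2 * x)" using h q by (intro mult_left_mono) auto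
    finally show ?thesis using True x0 y0 xy by simp
  next
    case False
    then have h: "q * x \<le> 2 * y" using Suc xy by auto
    have "4 * x \<le> (p * q) * x" using pq x0 by (intro mult_right_mono) auto
    also have "\<dots> = p * (q * x)" by (simp add: algebra_simps)
    also have "\<dots> \<le> p * (2 * y)" using h p by (intro mult_left_mono) auto
    finally show ?thesis using False x0 y0 xy by simp
  qed
qed

lemma dihedral_coeffs_nonneg_finite:
  assumes "(p, q) \<in> finite_rank2" "k < braid_order (p * q)"
  shows "fst (dihedral_coeffs p q k) \<ge> 0 \<and> snd (dihedral_coeffs p q k) \<ge> 0"
proof -
  have "k < 6" using assms(2) by (simp add: braid_order_def split: if_splits)
  then have "k = 0 \<or> k = 1 \<or> k = 2 \<or> k = 3 \<or> k = 4 \<or> k = 5" by auto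
  then show ?thesis using assms
    by (elim disjE; simp add: finite_rank2_def braid_order_def numeral_eq_Suc; elim disjE; simp)
qed

locale cartan_realization =
  fixes cor rt :: "'i::finite \<Rightarrow> int ^ 'd"
  assumes gcm: "gen_cartan_matrix (\<lambda>i j. pair (rt j) (cor i))"
begin

definition cartan :: "'i \<Rightarrow> 'i \<Rightarrow> int" where
  "cartan i j = pair (rt j) (cor i)"

definition simple_root :: "'i \<Rightarrow> int ^ 'i" where
  "simple_root i = axis i 1"

text \<open>\<open>pair (coroot_row j) b\<close> is the value of \<open>\<alpha>\<^sub>j\<^sup>\<vee>\<close> on the formal root \<open>\<Sum>\<^sub>k b\<^sub>k \<alpha>\<^sub>k\<close>.\<close>
definition coroot_row :: "'i \<Rightarrow> int ^ 'i" where
  "coroot_row j = (\<chi> k. cartan j k)"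

definition root_refl :: "'i \<Rightarrow> int ^ 'i \<Rightarrow> int ^ 'i" where
  "root_refl j = pseudo_refl (coroot_row j) (simple_root j)"

text \<open>Applies the letters from left to right, i.e. it is the action of \<open>w\<^sup>-\<^sup>1\<close> on roots.\<close>
definition root_act :: "'i list \<Rightarrow> int ^ 'i \<Rightarrow> int ^ 'i" where
  "root_act ws b = foldl (\<lambda>b j. root_refl j b) b ws"

definition root_eval :: "int ^ 'i \<Rightarrow> int ^ 'd \<Rightarrow> int" where
  "root_eval b v = (\<Sum>k\<in>UNIV. b $ k * pair (rt k) v)"

text \<open>
  Two words are identified when they act alike on \<open>Y\<close> and on the root lattice and have
  lengths of equal parity; the parity (the sign character) makes a word that is shorter
  than a reduced word equivalent to it at least two letters shorter.
\<close>
definition word_equiv :: "'i list \<Rightarrow> 'i list \<Rightarrow> bool" where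
  "word_equiv ws vs \<longleftrightarrow> word_act cor rt ws = word_act cor rt vs \<and> root_act ws = root_act vs
      \<and> even (length ws) = even (length vs)"

definition reduced :: "'i list \<Rightarrow> bool" where
  "reduced ws \<longleftrightarrow> (\<forall>vs. word_equiv vs ws \<longrightarrow> length ws \<le> length vs)"

lemma cartan_diag: "cartan i i = 2"
  using gcm by (simp add: gen_cartan_matrix_def cartan_def)

lemma cartan_off_diag: "i \<noteq> j \<Longrightarrow> cartan i j \<le> 0"
  using gcm by (simp add: gen_cartan_matrix_def cartan_def)

lemma cartan_zero_sym: "cartan i j = 0 \<longleftrightarrow> cartan j i = 0"
  using gcm unfolding gen_cartan_matrix_def cartan_def by blast

lemma pair_coroot_row_simple_root: "pair (coroot_row a) (simple_root b) = cartan a b"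
  by (simp add: coroot_row_def simple_root_def pair_axis)

lemma pair_rt_cor: "pair (rt a) (cor b) = cartan b a"
  by (simp add: cartan_def)

lemma refl_eq_pseudo_refl: "refl cor rt i = pseudo_refl (rt i) (cor i)"
  by (simp add: refl_def pseudo_refl_def fun_eq_iff)

lemma refl_involutive: "refl cor rt i (refl cor rt i v) = v"
  by (simp add: refl_eq_pseudo_refl pseudo_refl_involutive pair_rt_cor cartan_diag)

lemma root_refl_involutive: "root_refl i (root_refl i b) = b"
  by (simp add: root_refl_def pseudo_refl_involutive pair_coroot_row_simple_root cartan_diag)

lemma word_act_Nil [simp]: "word_act cor rt [] = id"
  by (simp add: word_act_def)

lemma word_act_Cons [simp]: "word_act cor rt (i # ws) = refl cor rt i \<circ> word_act cor rt ws"
  by (simp add: word_act_def)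

lemma word_act_append: "word_act cor rt (xs @ ys) = word_act cor rt xs \<circ> word_act cor rt ys"
  by (induction xs) auto

lemma word_act_alt: "word_act cor rt (alt a b (2 * n)) = (refl cor rt a \<circ> refl cor rt b) ^^ n"
  by (induction n) (auto simp: fun_eq_iff)

lemma root_act_Nil [simp]: "root_act [] = id"
  by (simp add: root_act_def fun_eq_iff)

lemma root_act_Cons [simp]: "root_act (i # ws) b = root_act ws (root_refl i b)"
  by (simp add: root_act_def)

lemma root_act_append: "root_act (xs @ ys) = root_act ys \<circ> root_act xs"
  by (simp add: root_act_def fun_eq_iff)

lemma root_act_linear: "root_act ws (x *s a + y *s b) = x *s root_act ws a + y *s root_act ws b"
  by (induction ws arbitrary: a b) (simp_all add: root_refl_def pseudo_refl_linear)

lemma root_act_alt: "root_act (alt a b (2 * n)) = (root_refl b \<circ> root_refl a) ^^ n"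
proof (induction n)
  case 0 then show ?case by simp
next
  case (Suc n)
  have "root_act (alt a b (2 * Suc n)) = root_act (alt a b (2 * n)) \<circ> root_act [a, b]"
    by (simp flip: root_act_append)
  also have "root_act [a, b] = root_refl b \<circ> root_refl a" by (simp add: fun_eq_iff)
  finally show ?case using Suc by (simp add: funpow_Suc_right del: funpow.simps)
qed

lemma root_eval_simple_root: "root_eval (simple_root j) v = pair (rt j) v"
proof -
  have "(\<Sum>k\<in>UNIV. axis j 1 $ k * pair (rt k) v) = (\<Sum>k\<in>UNIV. if k = j then pair (rt k) v else 0)"
    by (intro sum.cong) (auto simp: axis_def)
  then show ?thesis by (simp add: root_eval_def simple_root_def)
qed

lemma root_eval_refl: "root_eval b (refl cor rt j v) = root_eval (root_refl j b) v"
proof -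
  have cor: "root_eval b (cor j) = pair (coroot_row j) b"
    by (simp add: root_eval_def pair_def coroot_row_def cartan_def mult.commute)
  have "root_eval b (refl cor rt j v) = root_eval b v - pair (rt j) v * root_eval b (cor j)"
    by (simp add: root_eval_def refl_def pair_diff pair_smult sum_subtractf sum_distrib_left
        algebra_simps)
  also have "\<dots> = root_eval b v - pair (coroot_row j) b * root_eval (simple_root j) v"
    by (simp add: cor root_eval_simple_root)
  also have "\<dots> = root_eval (root_refl j b) v"
    by (simp add: root_eval_def root_refl_def pseudo_refl_def sum_subtractf sum_distrib_left
        algebra_simps)
  finally show ?thesis .
qed

lemma root_eval_word_act: "root_eval b (word_act cor rt ws v) = root_eval (root_act ws b) v"
  by (induction ws arbitrary: b) (simp_all add: root_eval_refl)

section \<open>Reduced words\<close>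

lemma word_equiv_refl [simp]: "word_equiv x x"
  by (simp add: word_equiv_def)

lemma word_equiv_sym: "word_equiv x y \<Longrightarrow> word_equiv y x"
  by (auto simp: word_equiv_def)

lemma word_equiv_trans: "word_equiv x y \<Longrightarrow> word_equiv y z \<Longrightarrow> word_equiv x z"
  by (auto simp: word_equiv_def)

lemma word_equiv_cong: "word_equiv a b \<Longrightarrow> word_equiv (xs @ a @ ys) (xs @ b @ ys)"
  by (auto simp: word_equiv_def word_act_append root_act_append)

lemma word_equiv_append_right: "word_equiv a b \<Longrightarrow> word_equiv (a @ ys) (b @ ys)"
  using word_equiv_cong[of a b "[]" ys] by simp

lemma word_equiv_append_left: "word_equiv a b \<Longrightarrow> word_equiv (xs @ a) (xs @ b)"
  using word_equiv_cong[of a b xs "[]"] by simp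

lemma word_equiv_double: "word_equiv [x, x] []"
  by (auto simp: word_equiv_def fun_eq_iff refl_involutive root_refl_involutive)

lemma word_equiv_cancel_double: "word_equiv (xs @ x # x # ys) (xs @ ys)"
  using word_equiv_cong[OF word_equiv_double, of xs x ys] by simp

lemma word_equiv_append_rev: "word_equiv (r @ rev r) []"
proof (induction r)
  case Nil then show ?case by simp
next
  case (Cons c r)
  have "word_equiv ([c] @ (r @ rev r) @ [c]) ([c] @ [] @ [c])"
    by (rule word_equiv_cong[OF Cons])
  then show ?case using word_equiv_trans[OF _ word_equiv_double] by simp
qed

lemma word_equiv_rev_of_trivial: "word_equiv (x @ r) [] \<Longrightarrow> word_equiv x (rev r)"
  using word_equiv_append_left[OF word_equiv_append_rev, of x r]
    word_equiv_append_right[of "x @ r" "[]" "rev r"]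
  by (auto intro: word_equiv_trans word_equiv_sym)

lemma reduced_le: "reduced ws \<Longrightarrow> word_equiv vs ws \<Longrightarrow> length ws \<le> length vs"
  by (simp add: reduced_def)

lemma reduced_equiv_same_length:
  "reduced w \<Longrightarrow> word_equiv x w \<Longrightarrow> length x = length w \<Longrightarrow> reduced x"
  unfolding reduced_def using word_equiv_trans by fastforce

lemma reduced_append_leftD: "reduced (xs @ ys) \<Longrightarrow> reduced xs"
  unfolding reduced_def using word_equiv_append_right by fastforce

lemma reduced_append_rightD: "reduced (xs @ ys) \<Longrightarrow> reduced ys"
  unfolding reduced_def using word_equiv_append_left by fastforce

lemma reduced_ConsD: "reduced (x # ys) \<Longrightarrow> reduced ys"
  using reduced_append_rightD[of "[x]" ys] by simp

lemma not_reduced_double: "\<not> reduced (xs @ x # x # ys)"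
  using reduced_le[OF _ word_equiv_sym[OF word_equiv_cancel_double]] by fastforce

lemma ex_reduced_equiv: "\<exists>w. word_equiv w ws \<and> reduced w"
proof -
  obtain w where w: "word_equiv w ws" and min: "\<And>u. word_equiv u ws \<Longrightarrow> length w \<le> length u"
    using ex_has_least_nat[of "\<lambda>w. word_equiv w ws" ws length] by auto
  have "reduced w"
    unfolding reduced_def using w min word_equiv_trans by blast
  with w show ?thesis by blast
qed

section \<open>Positivity of roots\<close>

lemma finite_rank2_cartan:
  assumes "a \<noteq> b" "cartan a b * cartan b a < 4"
  shows "(- cartan b a, - cartan a b) \<in> finite_rank2"
  using finite_rank2I[of "- cartan b a" "- cartan a b"] assms cartan_off_diag[of a b]
    cartan_off_diag[of b a] cartan_zero_sym[of a b]
  by (simp add: mult.commute)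

lemma word_equiv_braid:
  assumes ab: "a \<noteq> b" and fin: "cartan a b * cartan b a < 4"
  shows "word_equiv (alt a b (2 * braid_order (cartan a b * cartan b a))) []"
proof -
  define p where "p = - cartan b a"
  define q where "q = - cartan a b"
  have pq: "(p, q) \<in> finite_rank2" using finite_rank2_cartan[OF ab fin] by (simp add: p_def q_def)
  have m: "cartan a b * cartan b a = p * q" by (simp add: p_def q_def mult.commute)
  have "(pseudo_refl (rt a) (cor a) \<circ> pseudo_refl (rt b) (cor b)) ^^ braid_order (p * q) = id"
    by (rule pseudo_refl_braid[OF _ _ _ _ pq]) (simp_all add: pair_rt_cor cartan_diag p_def q_def)
  moreover have "(root_refl b \<circ> root_refl a) ^^ braid_order (p * q) = id"
    unfolding root_refl_def
    by (rule pseudo_refl_braid[OF _ _ _ _ pq])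
      (simp_all add: pair_coroot_row_simple_root cartan_diag p_def q_def)
  ultimately show ?thesis
    unfolding word_equiv_def m word_act_alt root_act_alt
    by (simp add: refl_eq_pseudo_refl fun_eq_iff)
qed

lemma not_reduced_long_alt:
  assumes ab: "a \<noteq> b" and fin: "cartan a b * cartan b a < 4"
    and n: "n > braid_order (cartan a b * cartan b a)"
  shows "\<not> reduced (alt a b n)"
proof
  assume red: "reduced (alt a b n)"
  define m where "m = braid_order (cartan a b * cartan b a)"
  have m2: "m \<ge> 2" unfolding m_def by (rule braid_order_ge_2)
  define R where "R = (if even (m + 1) then alt a b (m - 1) else alt b a (m - 1))"
  define T where "T = (if even (m + 1) then alt a b (n - (m + 1)) else alt b a (n - (m + 1)))"
  have "alt a b (2 * m) = alt a b (m + 1) @ R"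
    using alt_add[of a b "m + 1" "m - 1"] m2 unfolding R_def by (simp add: mult_2)
  then have "word_equiv (alt a b (m + 1)) (rev R)"
    using word_equiv_braid[OF ab fin] word_equiv_rev_of_trivial unfolding m_def by metis
  moreover have "alt a b n = alt a b (m + 1) @ T"
    using alt_add[of a b "m + 1" "n - (m + 1)"] n unfolding T_def m_def by simp
  ultimately have "word_equiv (rev R @ T) (alt a b n)"
    using word_equiv_append_right word_equiv_sym by metis
  moreover have "length R = m - 1" "length T = n - (m + 1)"
    unfolding R_def T_def by simp_all
  ultimately show False using reduced_le[OF red] n m2 unfolding m_def by fastforce
qed

lemma reduced_two_letters_alt:
  assumes "set xs \<subseteq> {c, d}" "c \<noteq> d" "reduced (c # xs)"
  shows "xs = alt d c (length xs)"
  using assms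
proof (induction xs arbitrary: c d)
  case Nil then show ?case by simp
next
  case (Cons x xs)
  have "x \<noteq> c" using Cons.prems(3) not_reduced_double[of "[]" c xs] by auto
  then have "x = d" using Cons.prems(1) by auto
  with Cons show ?case by (auto dest: reduced_ConsD)
qed

lemma root_refl_span2:
  assumes "i \<noteq> j"
  shows "root_refl j (x *s simple_root i + y *s simple_root j)
           = x *s simple_root i + (- y - cartan j i * x) *s simple_root j"
    and "root_refl i (x *s simple_root i + y *s simple_root j)
           = (- x - cartan i j * y) *s simple_root i + y *s simple_root j"
  by (simp_all add: root_refl_def pseudo_refl_def pair_add pair_smult
      pair_coroot_row_simple_root cartan_diag vec_eq_iff algebra_simps)

lemma root_act_alt_dihedral_coeffs:
  assumes ij: "i \<noteq> j"
  shows "root_act (alt j i k) (simple_root i) =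
    fst (dihedral_coeffs (- cartan i j) (- cartan j i) k) *s simple_root i
      + snd (dihedral_coeffs (- cartan i j) (- cartan j i) k) *s simple_root j"
proof (induction k)
  case 0 then show ?case by (simp add: vec_eq_iff simple_root_def)
next
  case (Suc k)
  then show ?case
    unfolding alt_Suc_snoc root_act_append
    by (simp add: root_refl_span2[OF ij] split: prod.splits) (simp add: vec_eq_iff algebra_simps)
qed

text \<open>For \<open>p q \<ge> 4\<close> the rank-2 Weyl group is infinite and all alternating words give
  positive roots; otherwise a reduced alternating word is shorter than the braid relation.\<close>
lemma dihedral_root_nonneg:
  assumes ij: "i \<noteq> j" and vJ: "set vJ \<subseteq> {i, j}" and red: "reduced (i # vJ)"
  shows "\<exists>x y. x \<ge> 0 \<and> y \<ge> 0 \<and> root_act vJ (simple_root i) = x *s simple_root i + y *s simple_root j"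
proof -
  define k where "k = length vJ"
  have vJ_alt: "vJ = alt j i k" using reduced_two_letters_alt[OF vJ ij red] unfolding k_def .
  define p where "p = - cartan i j"
  define q where "q = - cartan j i"
  have p0: "p \<ge> 0" and q0: "q \<ge> 0" using cartan_off_diag ij unfolding p_def q_def by auto
  have "fst (dihedral_coeffs p q k) \<ge> 0 \<and> snd (dihedral_coeffs p q k) \<ge> 0"
  proof (cases "p * q \<ge> 4")
    case True then show ?thesis using dihedral_coeffs_nonneg_infinite[OF p0 q0 True, of k] by simp
  next
    case False
    then have fin: "cartan i j * cartan j i < 4" unfolding p_def q_def by simp
    have "reduced (alt i j (Suc k))" using red vJ_alt by simp
    then have "\<not> braid_order (cartan i j * cartan j i) < Suc k"
      using not_reduced_long_alt[OF ij fin] by blast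
    then have "k < braid_order (p * q)" unfolding p_def q_def by simp
    moreover have "(p, q) \<in> finite_rank2"
      using finite_rank2_cartan[of j i] ij fin unfolding p_def q_def by (simp add: mult.commute)
    ultimately show ?thesis using dihedral_coeffs_nonneg_finite by blast
  qed
  then show ?thesis using root_act_alt_dihedral_coeffs[OF ij, of k] vJ_alt
    unfolding p_def q_def by blast
qed

text \<open>
  Write \<open>j # w = vJ @ v\<close> with \<open>vJ\<close> a word in \<open>{i, j}\<close> and \<open>v\<close> as short as possible;
  minimality of \<open>v\<close> prevents both \<open>i # v\<close> and \<open>j # v\<close> from being shortened.
\<close>
lemma parabolic_factorization:
  assumes red: "reduced (j # w)"
  shows "\<exists>vJ v. set vJ \<subseteq> {i, j} \<and> word_equiv (vJ @ v) (j # w)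
    \<and> length vJ + length v = Suc (length w) \<and> length v \<le> length w
    \<and> reduced (i # v) \<and> reduced (j # v)"
proof -
  define D where "D = {v. \<exists>vJ. set vJ \<subseteq> {i, j} \<and> word_equiv (vJ @ v) (j # w)
    \<and> length vJ + length v = Suc (length w)}"
  have wD: "w \<in> D" unfolding D_def by (intro CollectI exI[of _ "[j]"]) auto
  then obtain v where vD: "v \<in> D" and min: "\<And>u. u \<in> D \<Longrightarrow> length v \<le> length u"
    using ex_has_least_nat[of "\<lambda>v. v \<in> D" w length] by auto
  obtain vJ where vJ: "set vJ \<subseteq> {i, j}" "word_equiv (vJ @ v) (j # w)"
      "length vJ + length v = Suc (length w)"
    using vD unfolding D_def by blast
  have "reduced (c # v)" if c: "c \<in> {i, j}" for c
  proof (rule ccontr)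
    assume "\<not> reduced (c # v)"
    then obtain u where u: "word_equiv u (c # v)" "length u < Suc (length v)"
      unfolding reduced_def by (auto simp: not_le)
    then have ulen: "length u < length v"
      unfolding word_equiv_def by (cases "length u = length v") auto
    have "word_equiv ((vJ @ [c]) @ u) ((vJ @ [c]) @ (c # v))"
      by (rule word_equiv_append_left[OF u(1)])
    moreover have "word_equiv ((vJ @ [c]) @ (c # v)) (vJ @ v)"
      using word_equiv_cancel_double[of vJ c v] by simp
    ultimately have e: "word_equiv ((vJ @ [c]) @ u) (j # w)"
      using vJ(2) word_equiv_trans by blast
    have "Suc (length w) \<le> length ((vJ @ [c]) @ u)"
      using reduced_le[OF red e] by simp
    then have "u \<in> D" unfolding D_def
      using vJ c e ulen by (intro CollectI exI[of _ "vJ @ [c]"]) auto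
    from min[OF this] ulen show False by simp
  qed
  then show ?thesis using vJ min[OF wD] by blast
qed

lemma root_act_simple_root_nonneg:
  "reduced w \<Longrightarrow> reduced (i # w) \<Longrightarrow> 0 \<le> root_act w (simple_root i) $ k"
proof (induction "length w" arbitrary: w i k rule: less_induct)
  case less
  show ?case
  proof (cases w)
    case Nil then show ?thesis by (simp add: simple_root_def axis_def)
  next
    case (Cons j w')
    have ij: "i \<noteq> j" using less.prems(2) not_reduced_double[of "[]" i w'] Cons by auto
    obtain vJ v where vJ: "set vJ \<subseteq> {i, j}" "word_equiv (vJ @ v) w"
        "length vJ + length v = length w" "length v < length w"
      and red_iv: "reduced (i # v)" and red_jv: "reduced (j # v)"
      using parabolic_factorization[of j w' i] less.prems(1) Cons by auto
    have "reduced (vJ @ v)" using reduced_equiv_same_length[OF less.prems(1) vJ(2)] vJ(3) by simp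
    then have red_v: "reduced v" by (rule reduced_append_rightD)
    have "word_equiv ((i # vJ) @ v) (i # w)"
      using word_equiv_append_left[OF vJ(2), of "[i]"] by simp
    then have "reduced ((i # vJ) @ v)"
      using reduced_equiv_same_length[OF less.prems(2)] vJ(3) by simp
    then obtain x y where xy: "x \<ge> 0" "y \<ge> 0"
        "root_act vJ (simple_root i) = x *s simple_root i + y *s simple_root j"
      using dihedral_root_nonneg[OF ij vJ(1)] reduced_append_leftD by blast
    have "root_act w = root_act v \<circ> root_act vJ"
      using vJ(2) unfolding word_equiv_def root_act_append by simp
    then have "root_act w (simple_root i)
        = x *s root_act v (simple_root i) + y *s root_act v (simple_root j)"
      by (simp add: xy(3) root_act_linear)
    then show ?thesis
      using xy less.hyps[OF vJ(4) red_v red_iv] less.hyps[OF vJ(4) red_v red_jv] by simp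
  qed
qed

section \<open>The orbit of a dominant weight\<close>

lemma dominant_minus_reduced_orbit_nonneg:
  assumes dom: "dominant rt lam" and red: "reduced ws"
  shows "\<exists>c. (\<forall>i. c i \<ge> 0) \<and> lam - word_act cor rt ws lam = (\<Sum>i\<in>UNIV. c i *s cor i)"
  using red
proof (induction ws)
  case Nil
  show ?case by (intro exI[of _ "\<lambda>_. 0"]) simp
next
  case (Cons j ws)
  have red_ws: "reduced ws" using Cons.prems by (rule reduced_ConsD)
  obtain c where c: "\<forall>i. c i \<ge> 0" "lam - word_act cor rt ws lam = (\<Sum>i\<in>UNIV. c i *s cor i)"
    using Cons.IH[OF red_ws] by blast
  define t where "t = pair (rt j) (word_act cor rt ws lam)"
  have "t = root_eval (root_act ws (simple_root j)) lam"
    by (simp add: t_def root_eval_simple_root flip: root_eval_word_act)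
  then have t0: "t \<ge> 0"
    using root_act_simple_root_nonneg[OF red_ws Cons.prems] dom
    unfolding root_eval_def dominant_def by (auto intro: sum_nonneg)
  have "lam - word_act cor rt (j # ws) lam = (lam - word_act cor rt ws lam) + t *s cor j"
    by (simp add: t_def refl_def)
  also have "\<dots> = (\<Sum>i\<in>UNIV. (c i + (if i = j then t else 0)) *s cor i)"
    by (simp add: sum_coeffs_update c(2))
  finally show ?case using c(1) t0
    by (intro exI[of _ "\<lambda>i. c i + (if i = j then t else 0)"]) auto
qed

end

lemma height_eq:
  fixes cor :: "'i::finite \<Rightarrow> int ^ 'd"
  assumes free: "free_family cor"
  shows "height cor (\<Sum>i\<in>UNIV. c i *s cor i) = (\<Sum>i\<in>UNIV. c i)"
  unfolding height_def
proof (rule the_equality)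
  fix s assume "\<exists>c'. (\<Sum>i\<in>UNIV. c i *s cor i) = (\<Sum>i\<in>UNIV. c' i *s cor i) \<and> s = (\<Sum>i\<in>UNIV. c' i)"
  then obtain c' where c': "(\<Sum>i\<in>UNIV. c i *s cor i) = (\<Sum>i\<in>UNIV. c' i *s cor i)"
      "s = (\<Sum>i\<in>UNIV. c' i)"
    by blast
  have "(\<Sum>i\<in>UNIV. (c i - c' i) *s cor i) = 0"
    using c'(1) by (simp add: vector_sub_rdistrib sum_subtractf)
  then have "\<forall>i. c i - c' i = 0"
    using free[unfolded free_family_def, rule_format, of "\<lambda>i. c i - c' i"] by simp
  then show "s = (\<Sum>i\<in>UNIV. c i)" using c'(2) by simp
qed blast

lemma height_diff_smult:
  fixes cor :: "'i::finite \<Rightarrow> int ^ 'd"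
  assumes free: "free_family cor" and x: "in_Qcor cor x"
  shows "height cor (x - t *s cor j) = height cor x - t"
proof -
  obtain c where c: "x = (\<Sum>i\<in>UNIV. c i *s cor i)" using x unfolding in_Qcor_def by blast
  have "x - t *s cor j = (\<Sum>i\<in>UNIV. (c i + (if i = j then - t else 0)) *s cor i)"
    by (simp add: sum_coeffs_update c vector_smult_lneg)
  then show ?thesis by (simp add: height_eq[OF free] c sum.distrib)
qed

context cartan_realization
begin

lemma orbit_height_nonpos:
  assumes free: "free_family cor" and dom: "dominant rt lam"
  shows "in_Qcor cor (word_act cor rt ws lam - lam) \<and> height cor (word_act cor rt ws lam - lam) \<le> 0"
proof -
  obtain w where w: "word_equiv w ws" "reduced w" using ex_reduced_equiv by blast
  obtain c where c: "\<forall>i. c i \<ge> 0" "lam - word_act cor rt w lam = (\<Sum>i\<in>UNIV. c i *s cor i)"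
    using dominant_minus_reduced_orbit_nonneg[OF dom w(2)] by blast
  have "word_act cor rt ws lam - lam = - (\<Sum>i\<in>UNIV. c i *s cor i)"
    using c(2) w(1) by (simp add: word_equiv_def algebra_simps)
  also have "\<dots> = (\<Sum>i\<in>UNIV. (- c i) *s cor i)"
    by (simp add: sum_negf vector_smult_lneg)
  finally have "word_act cor rt ws lam - lam = (\<Sum>i\<in>UNIV. (- c i) *s cor i)" .
  moreover have "(\<Sum>i\<in>UNIV. - c i) \<le> 0" using c(1) by (simp add: sum_nonpos)
  ultimately show ?thesis unfolding in_Qcor_def by (auto simp: height_eq[OF free])
qed

text \<open>Each reflection \<open>r\<^sub>i\<close> with \<open>\<alpha>\<^sub>i(\<nu>) < 0\<close> raises the (nonpositive) height by at least one.\<close>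
lemma descent_to_dominant:
  assumes free: "free_family cor" and dom: "dominant rt lam"
  shows "\<exists>us v. dominant rt v \<and> word_act cor rt us v = word_act cor rt ws lam
    \<and> length us \<le> nat (- height cor (word_act cor rt ws lam - lam))"
proof (induction "nat (- height cor (word_act cor rt ws lam - lam))" arbitrary: ws rule: less_induct)
  case less
  let ?\<nu> = "word_act cor rt ws lam"
  show ?case
  proof (cases "dominant rt ?\<nu>")
    case True then show ?thesis by (intro exI[of _ "[]"] exI[of _ ?\<nu>]) simp
  next
    case False
    then obtain i where i: "pair (rt i) ?\<nu> < 0" unfolding dominant_def by (auto simp: not_le)
    have step: "word_act cor rt (i # ws) lam - lam = (?\<nu> - lam) - pair (rt i) ?\<nu> *s cor i"
      by (simp add: refl_def algebra_simps)
    have "height cor (word_act cor rt (i # ws) lam - lam) = height cor (?\<nu> - lam) - pair (rt i) ?\<nu>"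
      unfolding step by (rule height_diff_smult[OF free conjunct1[OF orbit_height_nonpos[OF free dom]]])
    then have smaller: "nat (- height cor (word_act cor rt (i # ws) lam - lam))
        < nat (- height cor (?\<nu> - lam))"
      using orbit_height_nonpos[OF free dom, of "i # ws"] i by simp
    obtain us v where uv: "dominant rt v" "word_act cor rt us v = word_act cor rt (i # ws) lam"
        "length us \<le> nat (- height cor (word_act cor rt (i # ws) lam - lam))"
      using less.hyps[OF smaller] by blast
    have "word_act cor rt (i # us) v = ?\<nu>" using uv(2) by (simp add: refl_involutive)
    moreover have "Suc (length us) \<le> nat (- height cor (?\<nu> - lam))"
      using uv(3) smaller by linarith
    ultimately show ?thesis using uv(1) by (metis length_Cons)
  qed
qed

lemma len_wmu_le_neg_height:
  assumes free: "free_family cor" and dom: "dominant rt lam"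
  shows "len_wmu cor rt (word_act cor rt ws lam) \<le> nat (- height cor (word_act cor rt ws lam - lam))"
proof -
  obtain us v where uv: "dominant rt v" "word_act cor rt us v = word_act cor rt ws lam"
    "length us \<le> nat (- height cor (word_act cor rt ws lam - lam))"
    using descent_to_dominant[OF free dom] by blast
  have "word_act cor rt us \<in> weyl cor rt" unfolding weyl_def by blast
  have "len_wmu cor rt (word_act cor rt ws lam) \<le> wlen cor rt (word_act cor rt us)"
    unfolding len_wmu_def by (rule Least_le) (use \<open>word_act cor rt us \<in> weyl cor rt\<close> uv in blast)
  also have "\<dots> \<le> length us"
    unfolding wlen_def by (rule Least_le) blast
  finally show ?thesis using uv(3) by simp
qed

end

theorem mainTheorem9:
  fixes cor rt :: "'i::finite \<Rightarrow> int ^ 'd"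
    and lam :: "int ^ 'd" and \<mu> :: "nat \<Rightarrow> int ^ 'd"
  assumes gcm: "gen_cartan_matrix (\<lambda>i j. pair (rt j) (cor i))"
    and free: "free_family cor"
    and dom: "dominant rt lam"
    and orbit: "\<forall>n. \<mu> n \<in> (\<lambda>w. w lam) ` weyl cor rt"
    and lenlim: "filterlim (\<lambda>n. len_wmu cor rt (\<mu> n)) at_top sequentially"
  shows "(\<forall>n. in_Qcor cor (\<mu> n - lam)) \<and>
         filterlim (\<lambda>n. height cor (\<mu> n - lam)) at_bot sequentially"
proof -
  interpret cartan_realization cor rt by (rule cartan_realization.intro[OF gcm])
  have "\<exists>ws. \<mu> n = word_act cor rt ws lam" for n using orbit unfolding weyl_def by blast
  then have Q: "in_Qcor cor (\<mu> n - lam)" and H: "height cor (\<mu> n - lam) \<le> 0"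
    and L: "len_wmu cor rt (\<mu> n) \<le> nat (- height cor (\<mu> n - lam))" for n
    using orbit_height_nonpos[OF free dom] len_wmu_le_neg_height[OF free dom] by metis+
  have "filterlim (\<lambda>n. height cor (\<mu> n - lam)) at_bot sequentially"
    unfolding filterlim_at_bot
  proof
    fix Z :: int
    have "eventually (\<lambda>n. nat (- Z) \<le> len_wmu cor rt (\<mu> n)) sequentially"
      using lenlim unfolding filterlim_at_top by blast
    then show "eventually (\<lambda>n. height cor (\<mu> n - lam) \<le> Z) sequentially"
    proof (rule eventually_mono)
      fix n assume "nat (- Z) \<le> len_wmu cor rt (\<mu> n)"
      then show "height cor (\<mu> n - lam) \<le> Z" using L[of n] H[of n] by simp
    qed
  qed
  with Q show ?thesis by blast
qed

end
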